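(* Let $n'$ be a positive even integer and $q\ge 4$ be even. There exists an ordering of all words of $\mathbb{Z}_q^{n'}$ in which consecutive words have Hamming distance $1$, beginning with $(0,0,\ldots,0)$ and ending with $(1,1,\ldots,1)$.
   Context: The Hamming distance between two words is the number of coordinates in which they differ. *)

theory Defs
  imports Main
begin

definition words :: "nat \<Rightarrow> nat \<Rightarrow> nat list set" where
  "words q n = {w. length w = n \<and> (\<forall>x\<in>set w. x < q)}"

definition hamming :: "'a list \<Rightarrow> 'a list \<Rightarrow> nat" where
  "hamming u v = card {i. i < length u \<and> i < length v \<and> u ! i \<noteq> v ! i}"

end

theory Submission
  imports Defs
begin

text \<open>Induction on the word length, for any two words \<open>a = a0 # a'\<close> and \<open>b = b0 # b'\<close>
that differ in every coordinate. List the letters as \<open>a0 = v 0, v 1, \<dots>, v (q - 1) = b0\<close> and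
traverse the layers \<open>v k # _\<close> one after the other, the \<open>k\<close>-th one by the induction hypothesis
from \<open>v k # s k\<close> to \<open>v k # s (k + 1)\<close>. This needs \<open>s 0 = a'\<close>, \<open>s q = b'\<close>, and consecutive
suffixes differing everywhere. Alternating \<open>a', b', a', \<dots>\<close> would end in \<open>a'\<close> since \<open>q\<close> is
even, so the parity is shifted once by a word \<open>c'\<close> avoiding \<open>a'\<close> and \<open>b'\<close> coordinatewise,
which exists as soon as \<open>q \<ge> 3\<close>: the suffixes are \<open>a', c', b', a', b', \<dots>, a', b'\<close>.\<close>

definition gray_path :: "'a list list \<Rightarrow> 'a list \<Rightarrow> 'a list \<Rightarrow> bool" where
  "gray_path ws a b \<longleftrightarrow> ws \<noteq> [] \<and> distinct ws \<and> successively (\<lambda>u v. hamming u v = 1) ws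
     \<and> hd ws = a \<and> last ws = b"

lemma hamming_Cons_Cons: "hamming (x # u) (y # v) = of_bool (x \<noteq> y) + hamming u v"
proof -
  let ?D = "\<lambda>u v. {i. i < length u \<and> i < length v \<and> u ! i \<noteq> v ! i}"
  have D: "?D (x # u) (y # v) = (if x \<noteq> y then {0} else {}) \<union> Suc ` ?D u v"
    by (rule set_eqI) (auto simp: image_iff nth_Cons' gr0_conv_Suc)
  have "finite (?D u v)"
    by (rule finite_subset[of _ "{..<length u}"]) auto
  then show ?thesis
    unfolding hamming_def D by (simp add: card_image)
qed

lemma hamming_self [simp]: "hamming u u = 0"
  by (simp add: hamming_def)

lemma gray_path_map_Cons: "gray_path ws a b \<Longrightarrow> gray_path (map ((#) x) ws) (x # a) (x # b)"
  unfolding gray_path_def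
  by (simp add: successively_map hamming_Cons_Cons distinct_map hd_map last_map)

lemma gray_path_append:
  assumes "gray_path xs a b" "gray_path ys c d" "set xs \<inter> set ys = {}" "hamming b c = 1"
  shows "gray_path (xs @ ys) a d"
  using assms unfolding gray_path_def by (auto simp: successively_append_iff)

lemma words_Suc: "words q (Suc n) = (\<Union>x<q. (#) x ` words q n)"
  unfolding words_def by (auto simp: length_Suc_conv)

lemma list_all2_neq_sym: "list_all2 (\<noteq>) u v \<Longrightarrow> list_all2 (\<noteq>) v u"
  by (auto simp: list_all2_conv_all_nth)

lemma words_avoiding_two:
  assumes "2 < q" "a \<in> words q n" "b \<in> words q n"
  shows "\<exists>c \<in> words q n. list_all2 (\<noteq>) a c \<and> list_all2 (\<noteq>) c b"
proof -
  define third :: "nat \<times> nat \<Rightarrow> nat" where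
    "third = (\<lambda>(x, y). if 0 \<notin> {x, y} then 0 else if 1 \<notin> {x, y} then 1 else 2)"
  have "map third (zip a b) \<in> words q n"
    using assms by (auto simp: words_def third_def)
  moreover have "list_all2 (\<noteq>) a (map third (zip a b)) \<and> list_all2 (\<noteq>) (map third (zip a b)) b"
    using assms(2,3) by (auto simp: words_def list_all2_conv_all_nth third_def)
  ultimately show ?thesis
    by blast
qed

lemma gray_path_layers:
  assumes "distinct vs" "vs \<noteq> []"
    and "\<forall>k < length vs. \<exists>p. gray_path p (s k) (s (Suc k)) \<and> set p = W"
  shows "\<exists>ws. gray_path ws (hd vs # s 0) (last vs # s (length vs))
           \<and> set ws = (\<Union>x\<in>set vs. (#) x ` W)"
  using assms
proof (induction vs arbitrary: s)
  case Nil
  then show ?case by simp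
next
  case (Cons v vs)
  obtain p where p: "gray_path p (s 0) (s 1)" "set p = W"
    using Cons.prems(3) by fastforce
  show ?case
  proof (cases "vs = []")
    case True
    then show ?thesis
      using gray_path_map_Cons[OF p(1)] p(2) by (intro exI[of _ "map ((#) v) p"]) auto
  next
    case False
    obtain ws where ws: "gray_path ws (hd vs # s 1) (last vs # s (Suc (length vs)))"
      "set ws = (\<Union>x\<in>set vs. (#) x ` W)"
      using Cons.IH[of "s \<circ> Suc"] Cons.prems False by auto
    have "v \<noteq> hd vs"
      using Cons.prems(1) False by (metis distinct.simps(2) list.set_sel(1))
    then have "gray_path (map ((#) v) p @ ws) (v # s 0) (last vs # s (Suc (length vs)))"
      using Cons.prems(1) ws(2)
      by (intro gray_path_append[OF gray_path_map_Cons[OF p(1)] ws(1)])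
        (auto simp: hamming_Cons_Cons)
    then show ?thesis
      using False ws p(2) by (intro exI[of _ "map ((#) v) p @ ws"]) auto
  qed
qed

lemma gray_path_words:
  assumes "2 < q" "even q"
  shows "a \<in> words q n \<Longrightarrow> b \<in> words q n \<Longrightarrow> list_all2 (\<noteq>) a b \<Longrightarrow>
     \<exists>ws. gray_path ws a b \<and> set ws = words q n"
proof (induction n arbitrary: a b)
  case 0
  then show ?case
    by (intro exI[of _ "[[]]"]) (auto simp: gray_path_def words_def)
next
  case (Suc n)
  obtain a0 a' b0 b' where ab: "a = a0 # a'" "b = b0 # b'"
    using Suc.prems(1,2) by (auto simp: words_def length_Suc_conv)
  have a': "a0 < q" "a' \<in> words q n" and b': "b0 < q" "b' \<in> words q n"
    using Suc.prems(1,2) ab by (auto simp: words_def)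
  have "a0 \<noteq> b0" "list_all2 (\<noteq>) a' b'"
    using Suc.prems(3) ab by auto
  obtain c' where c': "c' \<in> words q n" "list_all2 (\<noteq>) a' c'" "list_all2 (\<noteq>) c' b'"
    using words_avoiding_two[OF assms(1) a'(2) b'(2)] by blast
  define s where
    "s k = (if k = 0 then a' else if k = 1 then c' else if even k then b' else a')" for k :: nat
  define vs where "vs = a0 # filter (\<lambda>x. x \<noteq> a0 \<and> x \<noteq> b0) [0..<q] @ [b0]"
  have vs: "vs \<noteq> []" "distinct vs" "set vs = {0..<q}" "hd vs = a0" "last vs = b0"
    using \<open>a0 \<noteq> b0\<close> a' b' by (auto simp: vs_def)
  then have "length vs = q"
    by (metis card_atLeastLessThan diff_zero distinct_card)
  have "s k \<in> words q n \<and> s (Suc k) \<in> words q n \<and> list_all2 (\<noteq>) (s k) (s (Suc k))" for k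
    using a' b' c' \<open>list_all2 (\<noteq>) a' b'\<close> list_all2_neq_sym[OF \<open>list_all2 (\<noteq>) a' b'\<close>]
    by (auto simp: s_def)
  then have "\<forall>k < length vs. \<exists>p. gray_path p (s k) (s (Suc k)) \<and> set p = words q n"
    using Suc.IH by blast
  moreover have "s 0 = a'" "s (length vs) = b'"
    using \<open>length vs = q\<close> assms by (auto simp: s_def)
  ultimately show ?case
    using gray_path_layers[of vs s "words q n"] vs ab
    by (auto simp: words_Suc atLeast0LessThan)
qed

theorem lemma5:
  fixes n q :: nat
  assumes "n > 0" and "even n" and "q \<ge> 4" and "even q"
  shows "\<exists>ws :: nat list list.
           distinct ws \<and> set ws = words q n \<and>
           (\<forall>i. Suc i < length ws \<longrightarrow> hamming (ws ! i) (ws ! Suc i) = 1) \<and>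
           hd ws = replicate n 0 \<and> last ws = replicate n 1"
proof -
  have "replicate n 0 \<in> words q n" "replicate n 1 \<in> words q n"
    using assms by (auto simp: words_def)
  moreover have "list_all2 (\<noteq>) (replicate n (0::nat)) (replicate n 1)"
    by (simp add: list_all2_conv_all_nth)
  ultimately obtain ws where "gray_path ws (replicate n 0) (replicate n 1)" "set ws = words q n"
    using gray_path_words[of q] assms(3,4) by fastforce
  then show ?thesis
    unfolding gray_path_def by (auto simp: successively_conv_nth)
qed

end
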